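(* Let $f$ be a homeomorphism of a compact metric space $(X,d)$ with the L-shadowing property. Then for every $\epsilon>0$ there exists $\delta>0$ such that for every $x\in X$: if $V^s_\epsilon(x)\cap V^u_\epsilon(x)=\{x\}$ then $\Gamma_\delta(x)=\{x\}$.
   Context: L-shadowing: for every $\varepsilon>0$ there is $\delta>0$ such that every sequence $(x_k)_{k\in\mathbb{Z}}$ with $d(f(x_k),x_{k+1})\le\delta$ for all $k$ and $d(f(x_k),x_{k+1})\to0$ as $|k|\to\infty$ admits $z$ with $d(f^k(z),x_k)\le\varepsilon$ for all $k$ and $d(f^k(z),x_k)\to0$ as $|k|\to\infty$. $W^s_\epsilon(x)=\{y: d(f^n(x),f^n(y))\le\epsilon\ \forall n\ge0\}$, $W^u_\epsilon(x)=\{y: d(f^{-n}(x),f^{-n}(y))\le\epsilon\ \forall n\ge0\}$, $W^s(x)=\{y: d(f^n(x),f^n(y))\to0\ (n\to+\infty)\}$, $W^u(x)=\{y: d(f^{-n}(x),f^{-n}(y))\to0\ (n\to+\infty)\}$, $V^s_\epsilon(x)=W^s(x)\cap W^s_\epsilon(x)$, $V^u_\epsilon(x)=W^u(x)\cap W^u_\epsilon(x)$. Dynamical ball: $\Gamma_\delta(x)=\{y\in X: d(f^n(x),f^n(y))\le\delta\ \forall n\in\mathbb{Z}\}$. *)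

theory Defs
  imports "HOL-Analysis.Analysis"
begin

definition iter :: "('a \<Rightarrow> 'a) \<Rightarrow> ('a \<Rightarrow> 'a) \<Rightarrow> int \<Rightarrow> 'a \<Rightarrow> 'a" where
  "iter f g k = (if k \<ge> 0 then f ^^ nat k else g ^^ nat (- k))"

definition tends_to_zero_both :: "(int \<Rightarrow> real) \<Rightarrow> bool" where
  "tends_to_zero_both a \<longleftrightarrow> (a \<longlongrightarrow> 0) at_top \<and> (a \<longlongrightarrow> 0) at_bot"

definition L_shadowing :: "'a::metric_space set \<Rightarrow> ('a \<Rightarrow> 'a) \<Rightarrow> ('a \<Rightarrow> 'a) \<Rightarrow> bool" where
  "L_shadowing X f g \<longleftrightarrow>
    (\<forall>\<epsilon>>0. \<exists>\<delta>>0. \<forall>xs::int \<Rightarrow> 'a.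
       (\<forall>k. xs k \<in> X) \<and> (\<forall>k. dist (f (xs k)) (xs (k + 1)) \<le> \<delta>) \<and>
       tends_to_zero_both (\<lambda>k. dist (f (xs k)) (xs (k + 1)))
       \<longrightarrow> (\<exists>z\<in>X. (\<forall>k. dist (iter f g k z) (xs k) \<le> \<epsilon>) \<and>
                  tends_to_zero_both (\<lambda>k. dist (iter f g k z) (xs k))))"

definition local_stable :: "'a::metric_space set \<Rightarrow> ('a \<Rightarrow> 'a) \<Rightarrow> real \<Rightarrow> 'a \<Rightarrow> 'a set" where
  "local_stable X f e x = {y \<in> X. \<forall>n. dist ((f ^^ n) x) ((f ^^ n) y) \<le> e}"

definition local_unstable :: "'a::metric_space set \<Rightarrow> ('a \<Rightarrow> 'a) \<Rightarrow> real \<Rightarrow> 'a \<Rightarrow> 'a set" where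
  "local_unstable X g e x = {y \<in> X. \<forall>n. dist ((g ^^ n) x) ((g ^^ n) y) \<le> e}"

definition stable_set :: "'a::metric_space set \<Rightarrow> ('a \<Rightarrow> 'a) \<Rightarrow> 'a \<Rightarrow> 'a set" where
  "stable_set X f x = {y \<in> X. (\<lambda>n. dist ((f ^^ n) x) ((f ^^ n) y)) \<longlonglongrightarrow> 0}"

definition unstable_set :: "'a::metric_space set \<Rightarrow> ('a \<Rightarrow> 'a) \<Rightarrow> 'a \<Rightarrow> 'a set" where
  "unstable_set X g x = {y \<in> X. (\<lambda>n. dist ((g ^^ n) x) ((g ^^ n) y)) \<longlonglongrightarrow> 0}"

text \<open>V^s_e(x) = W^s(x) \<inter> W^s_e(x) and V^u_e(x) = W^u(x) \<inter> W^u_e(x); g is the inverse of f.\<close>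
definition V_s :: "'a::metric_space set \<Rightarrow> ('a \<Rightarrow> 'a) \<Rightarrow> real \<Rightarrow> 'a \<Rightarrow> 'a set" where
  "V_s X f e x = stable_set X f x \<inter> local_stable X f e x"

definition V_u :: "'a::metric_space set \<Rightarrow> ('a \<Rightarrow> 'a) \<Rightarrow> real \<Rightarrow> 'a \<Rightarrow> 'a set" where
  "V_u X g e x = unstable_set X g x \<inter> local_unstable X g e x"

definition dyn_ball :: "'a::metric_space set \<Rightarrow> ('a \<Rightarrow> 'a) \<Rightarrow> ('a \<Rightarrow> 'a) \<Rightarrow> real \<Rightarrow> 'a \<Rightarrow> 'a set" where
  "dyn_ball X f g \<delta> x = {y \<in> X. \<forall>k::int. dist (iter f g k x) (iter f g k y) \<le> \<delta>}"

end

theory Submission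
  imports Defs
begin

text \<open>Let y lie in the \<delta>-dynamical ball of x. It suffices to show that y is forward asymptotic
  to x: applied to the inverse, which inherits L-shadowing on the compact space, this also gives
  backward asymptoticity, so y \<in> V^s_\<epsilon>(x) \<inter> V^u_\<epsilon>(x) = {x}.

  Shadow the pseudo-orbit following x before time 0 and y afterwards by a point z; it is backward
  asymptotic to x and forward asymptotic to y. For an accumulation point (p, q) of
  (f^n x, f^n y), a shadow of the pseudo-orbit jumping from q to p, placed at a late return time
  of (f^n x, f^n y) near (p, q), is a true orbit segment leading from the orbit of y to that of x
  with arbitrarily small errors. Following z, this bridge and then x gives limit pseudo-orbits
  with arbitrarily small jumps that stay \<epsilon>-close to the orbit of x and are asymptotic to it at
  both ends. Their shadows lie in V^s_\<epsilon>(x) \<inter> V^u_\<epsilon>(x) = {x} and are arbitrarily close to z,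
  so z = x, and y is forward asymptotic to x.\<close>

lemma funpow_in:
  assumes "h ` X \<subseteq> X" "u \<in> X"
  shows "(h ^^ n) u \<in> X"
  using assms by (induction n) auto

lemma iter_0 [simp]: "iter f g 0 u = u"
  by (simp add: iter_def)

lemma iter_nat: "iter f g (int n) = f ^^ n"
  by (simp add: iter_def)

lemma iter_neg_nat: "iter f g (- int n) = g ^^ n"
  by (cases "n = 0") (simp_all add: iter_def)

lemma iter_uminus: "iter g f k = iter f g (- k)"
  by (simp add: iter_def)

lemma tendsto_int_at_top_iff:
  "(a \<longlongrightarrow> l) at_top \<longleftrightarrow> (\<lambda>n. a (int n)) \<longlonglongrightarrow> l"
  by (metis filterlim_compose filterlim_int_of_nat_at_topD filterlim_int_sequentially)

lemma tendsto_int_at_bot_iff: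
  "(a \<longlongrightarrow> l) at_bot \<longleftrightarrow> (\<lambda>n. a (- int n)) \<longlonglongrightarrow> l"
  unfolding at_bot_mirror filterlim_filtermap tendsto_int_at_top_iff ..

lemma tends_to_zero_both_reflect:
  assumes "tends_to_zero_both a"
  shows "tends_to_zero_both (\<lambda>k. a (c - k))"
proof -
  have "filterlim (\<lambda>k::int. c - k) at_bot at_top"
    unfolding filterlim_at_bot eventually_at_top_linorder
  proof
    show "\<exists>N. \<forall>k\<ge>N. c - k \<le> Z" for Z
      by (rule exI [of _ "c - Z"]) simp
  qed
  moreover have "filterlim (\<lambda>k::int. c - k) at_top at_bot"
    unfolding filterlim_at_top eventually_at_bot_linorder
  proof
    show "\<exists>N. \<forall>k\<le>N. Z \<le> c - k" for Z
      by (rule exI [of _ "c - Z"]) simp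
  qed
  ultimately show ?thesis
    using assms unfolding tends_to_zero_both_def by (auto intro: filterlim_compose)
qed

lemma tends_to_zero_bothE:
  assumes "tends_to_zero_both a" "0 < \<eta>"
  obtains N where "\<And>k. N \<le> \<bar>k\<bar> \<Longrightarrow> \<bar>a k\<bar> < \<eta>"
proof -
  obtain N1 N2 where N1: "\<forall>k\<ge>N1. \<bar>a k\<bar> < \<eta>" and N2: "\<forall>k\<le>N2. \<bar>a k\<bar> < \<eta>"
    using tendstoD [of a 0 at_top \<eta>] tendstoD [of a 0 at_bot \<eta>] assms
    unfolding tends_to_zero_both_def eventually_at_top_linorder eventually_at_bot_linorder
    by (auto simp: dist_real_def)
  have "\<bar>a k\<bar> < \<eta>" if "max \<bar>N1\<bar> \<bar>N2\<bar> \<le> \<bar>k\<bar>" for k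
  proof (cases "0 \<le> k")
    case True
    with that N1 show ?thesis by auto
  next
    case False
    with that N2 show ?thesis by auto
  qed
  then show ?thesis
    by (rule that)
qed

lemma tendsto_dist_zero_trans:
  assumes "((\<lambda>k. dist (a k) (b k)) \<longlongrightarrow> 0) F" "((\<lambda>k. dist (b k) (c k)) \<longlongrightarrow> 0) F"
  shows "((\<lambda>k. dist (a k) (c k)) \<longlongrightarrow> 0) F"
proof (rule tendsto_sandwich [of "\<lambda>_. 0" _ _ "\<lambda>k. dist (a k) (b k) + dist (b k) (c k)"])
  show "((\<lambda>k. dist (a k) (b k) + dist (b k) (c k)) \<longlongrightarrow> 0) F"
    using tendsto_add [OF assms] by simp
qed (auto intro: dist_triangle always_eventually)

lemma uniformly_continuous_on_tendsto_dist:
  assumes "uniformly_continuous_on X h" "\<And>k. a k \<in> X" "\<And>k. b k \<in> X"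
    and "((\<lambda>k. dist (a k) (b k)) \<longlongrightarrow> 0) F"
  shows "((\<lambda>k. dist (h (a k)) (h (b k))) \<longlongrightarrow> 0) F"
proof (rule tendstoI)
  fix e :: real
  assume "e > 0"
  then obtain d where "d > 0" and d: "\<forall>u\<in>X. \<forall>v\<in>X. dist v u < d \<longrightarrow> dist (h v) (h u) < e"
    using assms(1) unfolding uniformly_continuous_on_def by blast
  have "\<forall>\<^sub>F k in F. dist (a k) (b k) < d"
    using tendstoD [OF assms(4) \<open>d > 0\<close>] by simp
  then show "\<forall>\<^sub>F k in F. dist (dist (h (a k)) (h (b k))) 0 < e"
    by (rule eventually_mono) (use d assms(2,3) in \<open>auto simp: dist_commute\<close>)
qed

section \<open>Limit pseudo-orbits and their concatenation\<close>

definition limit_pseudo_orbit :: "'a::metric_space set \<Rightarrow> ('a \<Rightarrow> 'a) \<Rightarrow> real \<Rightarrow> (int \<Rightarrow> 'a) \<Rightarrow> bool"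
  where "limit_pseudo_orbit X f \<delta> xs \<longleftrightarrow>
    (\<forall>k. xs k \<in> X) \<and> (\<forall>k. dist (f (xs k)) (xs (k + 1)) \<le> \<delta>) \<and>
    tends_to_zero_both (\<lambda>k. dist (f (xs k)) (xs (k + 1)))"

definition limit_shadows :: "('a::metric_space \<Rightarrow> 'a) \<Rightarrow> ('a \<Rightarrow> 'a) \<Rightarrow> real \<Rightarrow> 'a \<Rightarrow> (int \<Rightarrow> 'a) \<Rightarrow> bool"
  where "limit_shadows f g \<epsilon> z xs \<longleftrightarrow>
    (\<forall>k. dist (iter f g k z) (xs k) \<le> \<epsilon>) \<and> tends_to_zero_both (\<lambda>k. dist (iter f g k z) (xs k))"

definition L_shadowing_at :: "'a::metric_space set \<Rightarrow> ('a \<Rightarrow> 'a) \<Rightarrow> ('a \<Rightarrow> 'a) \<Rightarrow> real \<Rightarrow> real \<Rightarrow> bool"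
  where "L_shadowing_at X f g \<epsilon> \<delta> \<longleftrightarrow>
    (\<forall>xs. limit_pseudo_orbit X f \<delta> xs \<longrightarrow> (\<exists>z\<in>X. limit_shadows f g \<epsilon> z xs))"

lemma L_shadowing_iff: "L_shadowing X f g \<longleftrightarrow> (\<forall>\<epsilon>>0. \<exists>\<delta>>0. L_shadowing_at X f g \<epsilon> \<delta>)"
  by (simp add: L_shadowing_def L_shadowing_at_def limit_pseudo_orbit_def limit_shadows_def)

lemma L_shadowing_at_mono:
  assumes "L_shadowing_at X f g \<epsilon> \<delta>" "\<delta>' \<le> \<delta>"
  shows "L_shadowing_at X f g \<epsilon> \<delta>'"
  using assms unfolding L_shadowing_at_def limit_pseudo_orbit_def by (blast intro: order_trans)

definition glue :: "int \<Rightarrow> (int \<Rightarrow> 'a) \<Rightarrow> (int \<Rightarrow> 'a) \<Rightarrow> int \<Rightarrow> 'a"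
  where "glue s a b k = (if k < s then a k else b k)"

lemma tendsto_glue_at_top:
  "((\<lambda>k. h k (glue s a b k)) \<longlongrightarrow> l) at_top \<longleftrightarrow> ((\<lambda>k. h k (b k)) \<longlongrightarrow> l) at_top"
  unfolding glue_def
  by (intro tendsto_cong) (auto simp: eventually_at_top_linorder intro: exI [of _ s])

lemma tendsto_glue_at_bot:
  "((\<lambda>k. h k (glue s a b k)) \<longlongrightarrow> l) at_bot \<longleftrightarrow> ((\<lambda>k. h k (a k)) \<longlongrightarrow> l) at_bot"
  unfolding glue_def
  by (intro tendsto_cong) (auto simp: eventually_at_bot_linorder intro: exI [of _ "s - 1"])

lemma limit_pseudo_orbit_glue:
  assumes a: "limit_pseudo_orbit X f \<delta> a" and b: "limit_pseudo_orbit X f \<delta> b"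
    and jump: "dist (f (a (s - 1))) (b s) \<le> \<delta>"
  shows "limit_pseudo_orbit X f \<delta> (glue s a b)"
proof -
  let ?jump = "\<lambda>c k. dist (f (c k)) (c (k + 1))"
  have "\<forall>\<^sub>F k in at_top. ?jump (glue s a b) k = ?jump b k"
    unfolding glue_def eventually_at_top_linorder by (auto intro: exI [of _ s])
  moreover have "\<forall>\<^sub>F k in at_bot. ?jump (glue s a b) k = ?jump a k"
    unfolding glue_def eventually_at_bot_linorder by (auto intro: exI [of _ "s - 2"])
  moreover have "?jump (glue s a b) k \<le> \<delta>" for k
    using a b jump by (cases "k = s - 1") (auto simp: glue_def limit_pseudo_orbit_def)
  ultimately show ?thesis
    using a b unfolding limit_pseudo_orbit_def tends_to_zero_both_def
    by (auto simp: glue_def tendsto_cong)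
qed

lemma limit_shadows_reverse:
  assumes "limit_shadows f g \<epsilon> z (\<lambda>k. ys (- k))"
  shows "limit_shadows g f \<epsilon> z ys"
  unfolding limit_shadows_def iter_uminus [of g f]
proof
  show "\<forall>k. dist (iter f g (- k) z) (ys k) \<le> \<epsilon>"
    using assms unfolding limit_shadows_def by (metis minus_minus)
  show "tends_to_zero_both (\<lambda>k. dist (iter f g (- k) z) (ys k))"
    using assms tends_to_zero_both_reflect [of "\<lambda>k. dist (iter f g k z) (ys (- k))" 0]
    unfolding limit_shadows_def by simp
qed

lemma dyn_ball_inverse: "dyn_ball X g f \<delta> x = dyn_ball X f g \<delta> x"
  unfolding dyn_ball_def iter_uminus [of g f] by (metis minus_minus)

lemma V_s_Int_V_u_eq:
  "V_s X f \<epsilon> x \<inter> V_u X g \<epsilon> x =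
    {w \<in> X. (\<forall>k. dist (iter f g k x) (iter f g k w) \<le> \<epsilon>) \<and>
      tends_to_zero_both (\<lambda>k. dist (iter f g k x) (iter f g k w))}"
proof -
  have all_int: "(\<forall>k::int. P k) \<longleftrightarrow> (\<forall>n. P (int n)) \<and> (\<forall>n. P (- int n))" for P
    by (metis int_cases2)
  show ?thesis
    unfolding V_s_def V_u_def stable_set_def unstable_set_def local_stable_def local_unstable_def
      tends_to_zero_both_def tendsto_int_at_top_iff tendsto_int_at_bot_iff
      all_int [of "\<lambda>k. _ k \<le> \<epsilon>"]
    by (auto simp: iter_nat iter_neg_nat)
qed

lemma V_s_eq_V_u: "V_s X h = V_u X h"
  by (simp add: fun_eq_iff V_s_def V_u_def stable_set_def unstable_set_def local_stable_def
      local_unstable_def)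

lemma limit_shadows_homoclinic:
  assumes "w \<in> X" "limit_shadows f g e w P"
    and "\<And>k. dist (P k) (iter f g k x) \<le> \<epsilon> - e"
    and "tends_to_zero_both (\<lambda>k. dist (P k) (iter f g k x))"
  shows "w \<in> V_s X f \<epsilon> x \<inter> V_u X g \<epsilon> x"
proof -
  have "dist (iter f g k x) (iter f g k w) \<le> \<epsilon>" for k
  proof -
    have "dist (iter f g k w) (P k) \<le> e"
      using assms(2) by (simp add: limit_shadows_def)
    with assms(3) [of k] show ?thesis
      by metric
  qed
  moreover have "((\<lambda>k. dist (iter f g k x) (iter f g k w)) \<longlongrightarrow> 0) F"
    if "((\<lambda>k. dist (iter f g k w) (P k)) \<longlongrightarrow> 0) F" "((\<lambda>k. dist (P k) (iter f g k x)) \<longlongrightarrow> 0) F" for F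
    using tendsto_dist_zero_trans [OF that] by (simp add: dist_commute)
  ultimately show ?thesis
    using assms unfolding V_s_Int_V_u_eq limit_shadows_def tends_to_zero_both_def by blast
qed

section \<open>Shadowing for a homeomorphism\<close>

context
  fixes X :: "'a::metric_space set" and f g :: "'a \<Rightarrow> 'a"
  assumes hom: "homeomorphism X X f g"
begin

lemma iter_in:
  assumes "u \<in> X"
  shows "iter f g k u \<in> X"
proof -
  have "f ` X \<subseteq> X" "g ` X \<subseteq> X"
    using hom by (auto simp: homeomorphism_def)
  with assms show ?thesis
    by (simp add: iter_def funpow_in)
qed

lemma iter_succ:
  assumes "u \<in> X"
  shows "f (iter f g k u) = iter f g (k + 1) u"
proof (cases "k \<ge> 0")
  case True
  then have "nat (k + 1) = Suc (nat k)" by simp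
  with True show ?thesis by (simp add: iter_def)
next
  case False
  define m where "m = nat (- k - 1)"
  have "(g ^^ m) u \<in> X"
    using hom assms by (intro funpow_in) (auto simp: homeomorphism_def)
  moreover have "iter f g k u = g ((g ^^ m) u)"
  proof -
    have "nat (- k) = Suc m"
      using False by (simp add: m_def)
    with False show ?thesis
      by (simp add: iter_def)
  qed
  moreover have "iter f g (k + 1) u = (g ^^ m) u"
    using False by (cases "m = 0") (auto simp: iter_def m_def)
  ultimately show ?thesis
    using hom by (simp add: homeomorphism_def)
qed

lemma iter_pred:
  assumes "u \<in> X"
  shows "g (iter f g k u) = iter f g (k - 1) u"
  using iter_succ [OF assms, of "k - 1"] iter_in [OF assms, of "k - 1"] hom
  unfolding homeomorphism_def by (metis diff_add_cancel)

lemma iter_add: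
  assumes "u \<in> X"
  shows "iter f g a (iter f g b u) = iter f g (a + b) u"
proof (induction a rule: int_induct [where k = 0])
  case base
  then show ?case by (simp add: iter_def)
next
  case (step1 i)
  have "iter f g (i + 1) (iter f g b u) = f (iter f g i (iter f g b u))"
    by (rule iter_succ [OF iter_in [OF assms], symmetric])
  also have "\<dots> = iter f g (i + b + 1) u"
    using step1 iter_succ [OF assms] by simp
  finally show ?case
    by (simp add: algebra_simps)
next
  case (step2 i)
  have "iter f g (i - 1) (iter f g b u) = g (iter f g i (iter f g b u))"
    by (rule iter_pred [OF iter_in [OF assms], symmetric])
  also have "\<dots> = iter f g (i + b - 1) u"
    using step2 iter_pred [OF assms] by simp
  finally show ?case
    by (simp add: algebra_simps)
qed

lemma continuous_on_iter: "continuous_on X (iter f g k)"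
proof (induction k rule: int_induct [where k = 0])
  case base
  then show ?case by (simp add: iter_def)
next
  case (step1 i)
  have "continuous_on X (f \<circ> iter f g i)"
    using step1 hom iter_in
    by (intro continuous_on_compose) (auto simp: homeomorphism_def elim: continuous_on_subset)
  then show ?case
    by (rule continuous_on_eq) (simp add: iter_succ)
next
  case (step2 i)
  have "continuous_on X (g \<circ> iter f g i)"
    using step2 hom iter_in
    by (intro continuous_on_compose) (auto simp: homeomorphism_def elim: continuous_on_subset)
  then show ?case
    by (rule continuous_on_eq) (simp add: iter_pred)
qed

lemma limit_pseudo_orbit_orbit:
  assumes "u \<in> X" "0 \<le> \<delta>"
  shows "limit_pseudo_orbit X f \<delta> (\<lambda>k. iter f g k u)"
  using assms iter_in iter_succ
  by (simp add: limit_pseudo_orbit_def tends_to_zero_both_def)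

lemma shadow_splice:
  assumes "L_shadowing_at X f g \<epsilon> \<delta>" "u \<in> X" "v \<in> X" "dist u v \<le> \<delta>"
  obtains z where "z \<in> X" "limit_shadows f g \<epsilon> z (glue 0 (\<lambda>k. iter f g k u) (\<lambda>k. iter f g k v))"
proof -
  have "0 \<le> \<delta>"
    using assms(4) zero_le_dist order_trans by blast
  moreover have "f (iter f g (-1) u) = u"
    using iter_succ [OF assms(2), of "-1"] by (simp add: iter_def)
  ultimately have "limit_pseudo_orbit X f \<delta> (glue 0 (\<lambda>k. iter f g k u) (\<lambda>k. iter f g k v))"
    using assms(2-4)
    by (intro limit_pseudo_orbit_glue limit_pseudo_orbit_orbit) (simp_all add: iter_def)
  then show ?thesis
    using assms(1) that unfolding L_shadowing_at_def by blast
qed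

lemma shadow_splice_ends:
  assumes "L_shadowing_at X f g e \<delta>" "u \<in> X" "v \<in> X" "dist u v \<le> \<delta>" "0 < \<eta>"
  obtains D L where "D \<in> X" "1 \<le> L"
    "\<And>m. dist (iter f g m D) (if m < 0 then iter f g m u else iter f g m v) \<le> e"
    "dist (iter f g (- L) D) (iter f g (- L) u) < \<eta>" "dist (iter f g L D) (iter f g L v) < \<eta>"
proof -
  obtain D where "D \<in> X"
    and D: "limit_shadows f g e D (glue 0 (\<lambda>k. iter f g k u) (\<lambda>k. iter f g k v))"
    using shadow_splice [OF assms(1-4)] by blast
  then have "tends_to_zero_both
      (\<lambda>k. dist (iter f g k D) (glue 0 (\<lambda>k. iter f g k u) (\<lambda>k. iter f g k v) k))"
    by (simp add: limit_shadows_def)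
  then obtain N where N: "\<And>k. N \<le> \<bar>k\<bar> \<Longrightarrow>
      dist (iter f g k D) (if k < 0 then iter f g k u else iter f g k v) < \<eta>"
    using \<open>0 < \<eta>\<close> by (elim tends_to_zero_bothE) (auto simp: glue_def)
  define L where "L = max 1 N"
  have "1 \<le> L" "N \<le> L"
    by (auto simp: L_def)
  then show ?thesis
    using \<open>D \<in> X\<close> D N [of L] N [of "- L"]
    by (intro that [of D L]) (auto simp: limit_shadows_def glue_def)
qed

text \<open>The jump of the reversed sequence at k is the image under f of the jump of ys at -1 - k.\<close>

lemma limit_pseudo_orbit_reverse:
  assumes "compact X" "0 < \<delta>"
  obtains \<rho> where "0 < \<rho>"
    "\<And>ys. limit_pseudo_orbit X g \<rho> ys \<Longrightarrow> limit_pseudo_orbit X f \<delta> (\<lambda>k. ys (- k))"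
proof -
  have uc: "uniformly_continuous_on X f"
    using hom assms(1) compact_uniformly_continuous by (auto simp: homeomorphism_def)
  then obtain \<rho> where "\<rho> > 0" and \<rho>: "\<forall>u\<in>X. \<forall>v\<in>X. dist v u < \<rho> \<longrightarrow> dist (f v) (f u) < \<delta>"
    using assms(2) unfolding uniformly_continuous_on_def by blast
  have "limit_pseudo_orbit X f \<delta> (\<lambda>k. ys (- k))" if ys: "limit_pseudo_orbit X g (\<rho> / 2) ys" for ys
  proof -
    have ysX: "ys k \<in> X" and gysX: "g (ys k) \<in> X" for k
      using ys hom by (auto simp: limit_pseudo_orbit_def homeomorphism_def)
    have jump: "dist (f (ys (- k))) (ys (- (k + 1))) = dist (f (ys (- k))) (f (g (ys (-1 - k))))"
      for k
    proof -
      have "ys (- (k + 1)) = ys (-1 - k)"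
        by (rule arg_cong [where f = ys]) simp
      moreover have "f (g (ys (-1 - k))) = ys (-1 - k)"
        using hom ysX by (simp add: homeomorphism_def)
      ultimately show ?thesis
        by simp
    qed
    have g_jump: "dist (ys (- k)) (g (ys (-1 - k))) = dist (g (ys (-1 - k))) (ys (-1 - k + 1))"
      for k
      by (simp add: dist_commute)
    have "dist (f (ys (- k))) (f (g (ys (-1 - k)))) < \<delta>" for k
    proof -
      have "dist (g (ys (-1 - k))) (ys (-1 - k + 1)) \<le> \<rho> / 2"
        using ys unfolding limit_pseudo_orbit_def by blast
      then have "dist (ys (- k)) (g (ys (-1 - k))) < \<rho>"
        using \<open>\<rho> > 0\<close> by (simp add: dist_commute)
      then show ?thesis
        using \<rho> ysX gysX by blast
    qed
    moreover have "tends_to_zero_both (\<lambda>k. dist (ys (- k)) (g (ys (-1 - k))))"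
      unfolding g_jump using ys unfolding limit_pseudo_orbit_def
      by (intro tends_to_zero_both_reflect) blast
    then have "tends_to_zero_both (\<lambda>k. dist (f (ys (- k))) (f (g (ys (-1 - k)))))"
      unfolding tends_to_zero_both_def
      using uniformly_continuous_on_tendsto_dist [OF uc, of "\<lambda>k. ys (- k)" "\<lambda>k. g (ys (-1 - k))"]
        ysX gysX by blast
    ultimately show ?thesis
      unfolding limit_pseudo_orbit_def jump using ysX by (auto intro: less_imp_le)
  qed
  with \<open>\<rho> > 0\<close> show ?thesis
    by (intro that [of "\<rho> / 2"]) auto
qed

lemma L_shadowing_inverse:
  assumes "compact X" "L_shadowing X f g"
  shows "L_shadowing X g f"
  unfolding L_shadowing_iff
proof (intro allI impI)
  fix \<epsilon> :: real
  assume "\<epsilon> > 0"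
  then obtain \<delta> where "\<delta> > 0" and sh: "L_shadowing_at X f g \<epsilon> \<delta>"
    using assms(2) unfolding L_shadowing_iff by blast
  then obtain \<rho> where "0 < \<rho>"
    and reverse: "\<And>ys. limit_pseudo_orbit X g \<rho> ys \<Longrightarrow> limit_pseudo_orbit X f \<delta> (\<lambda>k. ys (- k))"
    using limit_pseudo_orbit_reverse [OF assms(1)] by blast
  have "L_shadowing_at X g f \<epsilon> \<rho>"
    using sh reverse limit_shadows_reverse unfolding L_shadowing_at_def by blast
  with \<open>0 < \<rho>\<close> show "\<exists>\<rho>>0. L_shadowing_at X g f \<epsilon> \<rho>"
    by blast
qed

lemma orbit_pair_returns:
  assumes "compact X" "x \<in> X" "y \<in> dyn_ball X f g \<delta> x"
  obtains p q where "p \<in> X" "q \<in> X" "dist p q \<le> \<delta>"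
    "\<And>L \<eta> T. \<eta> > 0 \<Longrightarrow> \<exists>t\<ge>T. \<forall>m\<in>{-L..L}.
       dist (iter f g (m + t) x) (iter f g m p) < \<eta> \<and> dist (iter f g (m + t) y) (iter f g m q) < \<eta>"
proof -
  have "y \<in> X" and yd: "\<And>k. dist (iter f g k x) (iter f g k y) \<le> \<delta>"
    using assms(3) by (auto simp: dyn_ball_def)
  have "seq_compact (X \<times> X)"
    using assms(1) by (intro compact_imp_seq_compact compact_Times)
  moreover have "(iter f g (int n) x, iter f g (int n) y) \<in> X \<times> X" for n
    using assms(2) \<open>y \<in> X\<close> iter_in by simp
  ultimately obtain pq r where "pq \<in> X \<times> X" "strict_mono r"
    and lim: "((\<lambda>n. (iter f g (int n) x, iter f g (int n) y)) \<circ> r) \<longlonglongrightarrow> pq"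
    unfolding seq_compact_def by meson
  obtain p q where pq: "pq = (p, q)" "p \<in> X" "q \<in> X"
    using \<open>pq \<in> X \<times> X\<close> by auto
  have px: "(\<lambda>n. iter f g (int (r n)) x) \<longlonglongrightarrow> p" and qy: "(\<lambda>n. iter f g (int (r n)) y) \<longlonglongrightarrow> q"
    using tendsto_fst [OF lim] tendsto_snd [OF lim] by (simp_all add: pq o_def)
  have "dist p q \<le> \<delta>"
    using yd by (intro LIMSEQ_le_const2 [OF tendsto_dist [OF px qy]]) auto
  moreover have "\<exists>t\<ge>T. \<forall>m\<in>{-L..L}.
       dist (iter f g (m + t) x) (iter f g m p) < \<eta> \<and> dist (iter f g (m + t) y) (iter f g m q) < \<eta>"
    if "\<eta> > 0" for L \<eta> T
  proof -
    have close:
      "\<forall>\<^sub>F n in sequentially. dist (iter f g m (iter f g (int (r n)) u)) (iter f g m v) < \<eta>"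
      if "(\<lambda>n. iter f g (int (r n)) u) \<longlonglongrightarrow> v" "u \<in> X" "v \<in> X" for m u v
    proof -
      have "(\<lambda>n. iter f g m (iter f g (int (r n)) u)) \<longlonglongrightarrow> iter f g m v"
        using that iter_in by (intro continuous_on_tendsto_compose [OF continuous_on_iter]) auto
      then show ?thesis
        using \<open>\<eta> > 0\<close> by (rule tendstoD)
    qed
    have "\<forall>\<^sub>F n in sequentially. \<forall>m\<in>{-L..L}.
       dist (iter f g m (iter f g (int (r n)) x)) (iter f g m p) < \<eta> \<and>
       dist (iter f g m (iter f g (int (r n)) y)) (iter f g m q) < \<eta>"
      using close px qy pq assms(2) \<open>y \<in> X\<close>
      by (intro eventually_ball_finite ballI eventually_conj) auto
    then obtain N where N: "\<forall>n\<ge>N. \<forall>m\<in>{-L..L}.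
       dist (iter f g m (iter f g (int (r n)) x)) (iter f g m p) < \<eta> \<and>
       dist (iter f g m (iter f g (int (r n)) y)) (iter f g m q) < \<eta>"
      unfolding eventually_sequentially by blast
    define n where "n = max N (nat T)"
    have "T \<le> int (r n)"
      using seq_suble [OF \<open>strict_mono r\<close>, of n] by (simp add: n_def) arith
    with N show ?thesis
      using iter_add assms(2) \<open>y \<in> X\<close> by (intro exI [of _ "int (r n)"]) (auto simp: n_def)
  qed
  ultimately show ?thesis
    using pq that by blast
qed

lemma orbit_bridge:
  assumes "compact X" "L_shadowing_at X f g e \<delta>" "x \<in> X" "y \<in> dyn_ball X f g \<delta> x" "\<eta> > 0"
  obtains B a b where "B \<in> X" "T \<le> a" "a < b"
    "dist (iter f g a B) (iter f g a y) < 2 * \<eta>"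
    "dist (iter f g b B) (iter f g b x) < 2 * \<eta>"
    "\<And>k. a \<le> k \<Longrightarrow> k \<le> b \<Longrightarrow> dist (iter f g k B) (iter f g k x) \<le> e + \<delta> + \<eta>"
proof -
  have yd: "\<And>k. dist (iter f g k x) (iter f g k y) \<le> \<delta>"
    using assms(4) by (auto simp: dyn_ball_def)
  obtain p q where "p \<in> X" "q \<in> X" "dist p q \<le> \<delta>"
    and returns: "\<And>L \<eta> T. \<eta> > 0 \<Longrightarrow> \<exists>t\<ge>T. \<forall>m\<in>{-L..L}.
       dist (iter f g (m + t) x) (iter f g m p) < \<eta> \<and> dist (iter f g (m + t) y) (iter f g m q) < \<eta>"
    using orbit_pair_returns [OF assms(1,3,4)] by blast
  have "dist q p \<le> \<delta>"
    using \<open>dist p q \<le> \<delta>\<close> by (simp add: dist_commute)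
  then obtain D L where "D \<in> X" "1 \<le> L"
    and D_near: "\<And>m. dist (iter f g m D) (if m < 0 then iter f g m q else iter f g m p) \<le> e"
    and L: "dist (iter f g (- L) D) (iter f g (- L) q) < \<eta>" "dist (iter f g L D) (iter f g L p) < \<eta>"
    using shadow_splice_ends [OF assms(2) \<open>q \<in> X\<close> \<open>p \<in> X\<close> _ \<open>\<eta> > 0\<close>] by blast
  obtain t where "T + L \<le> t" and window: "\<forall>m\<in>{-L..L}.
       dist (iter f g (m + t) x) (iter f g m p) < \<eta> \<and> dist (iter f g (m + t) y) (iter f g m q) < \<eta>"
    using returns [OF \<open>\<eta> > 0\<close>] by blast
  define B where "B = iter f g (- t) D"
  have B_iter: "iter f g k B = iter f g (k - t) D" for k
    using iter_add [OF \<open>D \<in> X\<close>] by (simp add: B_def)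
  have W: "dist (iter f g k x) (iter f g (k - t) p) < \<eta> \<and>
      dist (iter f g k y) (iter f g (k - t) q) < \<eta>" if "t - L \<le> k" "k \<le> t + L" for k
    using window [rule_format, of "k - t"] that by simp
  show ?thesis
  proof (rule that [of B "t - L" "t + L"])
    show "B \<in> X" "T \<le> t - L" "t - L < t + L"
      using iter_in [OF \<open>D \<in> X\<close>] \<open>T + L \<le> t\<close> \<open>1 \<le> L\<close> by (auto simp: B_def)
    show "dist (iter f g (t - L) B) (iter f g (t - L) y) < 2 * \<eta>"
      using W [of "t - L"] L(1) \<open>1 \<le> L\<close> by (simp add: B_iter) metric
    show "dist (iter f g (t + L) B) (iter f g (t + L) x) < 2 * \<eta>"
      using W [of "t + L"] L(2) \<open>1 \<le> L\<close> by (simp add: B_iter) metric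
    show "dist (iter f g k B) (iter f g k x) \<le> e + \<delta> + \<eta>" if "t - L \<le> k" "k \<le> t + L" for k
    proof (cases "k < t")
      case True
      then show ?thesis
        using D_near [of "k - t"] W [OF that] yd [of k] by (simp add: B_iter) metric
    next
      case False
      then show ?thesis
        using D_near [of "k - t"] W [OF that] yd [of k] by (simp add: B_iter) metric
    qed
  qed
qed

lemma closing_pseudo_orbit:
  assumes "compact X" "L_shadowing_at X f g e \<delta>" "x \<in> X" "y \<in> dyn_ball X f g \<delta> x" "z \<in> X" "0 < \<eta>"
    and z_near: "\<And>k. dist (iter f g k z) (iter f g k x) \<le> r"
    and z_bwd: "((\<lambda>k. dist (iter f g k z) (iter f g k x)) \<longlongrightarrow> 0) at_bot"
    and z_fwd: "((\<lambda>k. dist (iter f g k z) (iter f g k y)) \<longlongrightarrow> 0) at_top"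
  obtains P where "limit_pseudo_orbit X f (3 * \<eta>) P" "P 0 = z"
    "\<And>k. dist (P k) (iter f g k x) \<le> max r (e + \<delta> + \<eta>)"
    "tends_to_zero_both (\<lambda>k. dist (P k) (iter f g k x))"
proof -
  obtain K where K: "\<And>k. K \<le> k \<Longrightarrow> dist (iter f g k z) (iter f g k y) < \<eta>"
    using tendstoD [OF z_fwd \<open>0 < \<eta>\<close>] by (auto simp: eventually_at_top_linorder)
  obtain B a b where "B \<in> X" "max K 1 \<le> a" "a < b"
    and entry: "dist (iter f g a B) (iter f g a y) < 2 * \<eta>"
    and exit: "dist (iter f g b B) (iter f g b x) < 2 * \<eta>"
    and bridge: "\<And>k. a \<le> k \<Longrightarrow> k \<le> b \<Longrightarrow> dist (iter f g k B) (iter f g k x) \<le> e + \<delta> + \<eta>"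
    using orbit_bridge [OF assms(1-4,6)] by blast
  have f_iter: "f (iter f g (k - 1) u) = iter f g k u" if "u \<in> X" for k u
    using iter_succ [OF that, of "k - 1"] by simp
  define P where "P = glue a (\<lambda>k. iter f g k z) (glue b (\<lambda>k. iter f g k B) (\<lambda>k. iter f g k x))"
  show ?thesis
  proof (rule that)
    show "limit_pseudo_orbit X f (3 * \<eta>) P"
      unfolding P_def
    proof (intro limit_pseudo_orbit_glue limit_pseudo_orbit_orbit)
      show "dist (f (iter f g (b - 1) B)) (iter f g b x) \<le> 3 * \<eta>"
        using exit \<open>B \<in> X\<close> \<open>0 < \<eta>\<close> by (simp add: f_iter)
      show "dist (f (iter f g (a - 1) z)) (glue b (\<lambda>k. iter f g k B) (\<lambda>k. iter f g k x) a) \<le> 3 * \<eta>"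
        using entry K [of a] \<open>z \<in> X\<close> \<open>max K 1 \<le> a\<close> \<open>a < b\<close>
        by (simp add: f_iter glue_def) metric
    qed (use \<open>0 < \<eta>\<close> \<open>B \<in> X\<close> assms(3,5) in auto)
    show "P 0 = z"
      using \<open>max K 1 \<le> a\<close> by (simp add: P_def glue_def)
    show "dist (P k) (iter f g k x) \<le> max r (e + \<delta> + \<eta>)" for k
      using z_near [of k] bridge [of k] order_trans [OF zero_le_dist z_near]
      by (auto simp: P_def glue_def le_max_iff_disj)
    show "tends_to_zero_both (\<lambda>k. dist (P k) (iter f g k x))"
      unfolding tends_to_zero_both_def P_def
      using z_bwd tendsto_glue_at_top [where h = "\<lambda>k u. dist u (iter f g k x)"]
        tendsto_glue_at_bot [where h = "\<lambda>k u. dist u (iter f g k x)"] by simp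
  qed
qed

lemma homoclinic_point_near:
  assumes "compact X" "L_shadowing X f g" "L_shadowing_at X f g (\<epsilon> / 3) \<delta>" "\<delta> \<le> \<epsilon> / 3"
    and "x \<in> X" "y \<in> dyn_ball X f g \<delta> x" "z \<in> X"
    and z_near: "\<And>k. dist (iter f g k z) (iter f g k x) \<le> 2 * \<epsilon> / 3"
    and z_bwd: "((\<lambda>k. dist (iter f g k z) (iter f g k x)) \<longlongrightarrow> 0) at_bot"
    and z_fwd: "((\<lambda>k. dist (iter f g k z) (iter f g k y)) \<longlongrightarrow> 0) at_top"
    and "0 < d" "d \<le> \<epsilon> / 6"
  obtains w where "w \<in> V_s X f \<epsilon> x \<inter> V_u X g \<epsilon> x" "dist w z \<le> d"
proof -
  obtain \<delta>' where "0 < \<delta>'" and sh: "L_shadowing_at X f g d \<delta>'"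
    using assms(2) \<open>0 < d\<close> unfolding L_shadowing_iff by blast
  define \<eta> where "\<eta> = min (\<epsilon> / 6) (\<delta>' / 3)"
  have "0 < \<eta>" "\<eta> \<le> \<epsilon> / 6" "3 * \<eta> \<le> \<delta>'"
    using \<open>0 < \<delta>'\<close> \<open>0 < d\<close> \<open>d \<le> \<epsilon> / 6\<close> by (auto simp: \<eta>_def)
  obtain P where P: "limit_pseudo_orbit X f (3 * \<eta>) P" "P 0 = z"
    "\<And>k. dist (P k) (iter f g k x) \<le> max (2 * \<epsilon> / 3) (\<epsilon> / 3 + \<delta> + \<eta>)"
    "tends_to_zero_both (\<lambda>k. dist (P k) (iter f g k x))"
    using closing_pseudo_orbit [OF assms(1,3,5-7) \<open>0 < \<eta>\<close> z_near z_bwd z_fwd] by blast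
  then obtain w where "w \<in> X" and w: "limit_shadows f g d w P"
    using L_shadowing_at_mono [OF sh \<open>3 * \<eta> \<le> \<delta>'\<close>] unfolding L_shadowing_at_def by blast
  have "max (2 * \<epsilon> / 3) (\<epsilon> / 3 + \<delta> + \<eta>) \<le> \<epsilon> - d"
    unfolding max.bounded_iff using assms(4) \<open>\<eta> \<le> \<epsilon> / 6\<close> \<open>0 < d\<close> \<open>d \<le> \<epsilon> / 6\<close>
    by (intro conjI) linarith+
  then have "dist (P k) (iter f g k x) \<le> \<epsilon> - d" for k
    using P(3) [of k] by (rule order_trans [rotated])
  then have "w \<in> V_s X f \<epsilon> x \<inter> V_u X g \<epsilon> x"
    using limit_shadows_homoclinic [OF \<open>w \<in> X\<close> w] P(4) by blast
  moreover have "dist (iter f g 0 w) (P 0) \<le> d"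
    using w unfolding limit_shadows_def by blast
  ultimately show ?thesis
    using P(2) that by simp
qed

lemma dyn_ball_forward_asymptotic:
  assumes "compact X" "L_shadowing X f g" "0 < \<epsilon>" "L_shadowing_at X f g (\<epsilon> / 3) \<delta>" "\<delta> \<le> \<epsilon> / 3"
    and "x \<in> X" "V_s X f \<epsilon> x \<inter> V_u X g \<epsilon> x \<subseteq> {x}" "y \<in> dyn_ball X f g \<delta> x"
  shows "((\<lambda>k. dist (iter f g k x) (iter f g k y)) \<longlongrightarrow> 0) at_top"
proof -
  have yX: "y \<in> X" and yd: "\<And>k. dist (iter f g k x) (iter f g k y) \<le> \<delta>"
    using assms(8) by (auto simp: dyn_ball_def)
  obtain z where "z \<in> X"
    and z: "limit_shadows f g (\<epsilon> / 3) z (glue 0 (\<lambda>k. iter f g k x) (\<lambda>k. iter f g k y))"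
    using shadow_splice [OF assms(4,6) yX] yd [of 0] by auto
  have z_near: "dist (iter f g k z) (iter f g k x) \<le> 2 * \<epsilon> / 3" for k
  proof -
    have "dist (iter f g k z) (if k < 0 then iter f g k x else iter f g k y) \<le> \<epsilon> / 3"
      using z by (simp add: limit_shadows_def glue_def)
    then show ?thesis
    proof (cases "k < 0")
      case False
      then have "dist (iter f g k z) (iter f g k y) \<le> \<epsilon> / 3"
        using \<open>dist (iter f g k z) _ \<le> \<epsilon> / 3\<close> by simp
      with yd [of k] assms(5) show ?thesis
        by metric
    qed (use assms(3) in simp)
  qed
  have z_bwd: "((\<lambda>k. dist (iter f g k z) (iter f g k x)) \<longlongrightarrow> 0) at_bot"
    and z_fwd: "((\<lambda>k. dist (iter f g k z) (iter f g k y)) \<longlongrightarrow> 0) at_top"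
    using z unfolding limit_shadows_def tends_to_zero_both_def
      tendsto_glue_at_bot [where h = "\<lambda>k u. dist (iter f g k z) u"]
      tendsto_glue_at_top [where h = "\<lambda>k u. dist (iter f g k z) u"] by simp_all
  have "dist z x \<le> 0"
  proof (rule field_le_epsilon)
    fix d :: real
    assume "0 < d"
    with \<open>0 < \<epsilon>\<close> have "0 < min d (\<epsilon> / 6)" "min d (\<epsilon> / 6) \<le> \<epsilon> / 6"
      by auto
    then obtain w where "w \<in> V_s X f \<epsilon> x \<inter> V_u X g \<epsilon> x" "dist w z \<le> min d (\<epsilon> / 6)"
      by (rule homoclinic_point_near [OF assms(1,2,4,5,6,8) \<open>z \<in> X\<close> z_near z_bwd z_fwd])
    with assms(7) show "dist z x \<le> 0 + d"
      by (auto simp: dist_commute)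
  qed
  with z_fwd show ?thesis
    by simp
qed

end

lemma dyn_ball_subset_homoclinic:
  assumes hom: "homeomorphism X X f g" and "compact X" "L_shadowing X f g" "0 < \<epsilon>"
    and "L_shadowing_at X f g (\<epsilon> / 3) \<delta>" "L_shadowing_at X g f (\<epsilon> / 3) \<delta>" "\<delta> \<le> \<epsilon> / 3"
    and "x \<in> X" "V_s X f \<epsilon> x \<inter> V_u X g \<epsilon> x \<subseteq> {x}"
  shows "dyn_ball X f g \<delta> x \<subseteq> V_s X f \<epsilon> x \<inter> V_u X g \<epsilon> x"
proof
  fix y
  assume y: "y \<in> dyn_ball X f g \<delta> x"
  have "V_s X g \<epsilon> x \<inter> V_u X f \<epsilon> x \<subseteq> {x}"
    using assms(9) by (simp add: V_s_eq_V_u [of X g] V_s_eq_V_u [of X f, symmetric] Int_commute)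
  moreover have "y \<in> dyn_ball X g f \<delta> x"
    using y by (simp add: dyn_ball_inverse)
  ultimately have "((\<lambda>k. dist (iter g f k x) (iter g f k y)) \<longlongrightarrow> 0) at_top"
    by (rule dyn_ball_forward_asymptotic [OF homeomorphism_symD [OF hom] assms(2)
          L_shadowing_inverse [OF hom assms(2,3)] assms(4,6-8)])
  then have "((\<lambda>k. dist (iter f g k x) (iter f g k y)) \<longlongrightarrow> 0) at_bot"
    unfolding at_bot_mirror filterlim_filtermap iter_uminus [of g f] .
  moreover have "((\<lambda>k. dist (iter f g k x) (iter f g k y)) \<longlongrightarrow> 0) at_top"
    by (rule dyn_ball_forward_asymptotic [OF hom assms(2-5,7-9) y])
  moreover have "dist (iter f g k x) (iter f g k y) \<le> \<epsilon>" for k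
    using y assms(4,7) by (auto simp: dyn_ball_def intro: order_trans)
  ultimately show "y \<in> V_s X f \<epsilon> x \<inter> V_u X g \<epsilon> x"
    using y unfolding V_s_Int_V_u_eq tends_to_zero_both_def dyn_ball_def by blast
qed

theorem mainTheorem12:
  fixes X :: "'a::metric_space set" and f g :: "'a \<Rightarrow> 'a"
  assumes "compact X"
    and "homeomorphism X X f g"
    and "L_shadowing X f g"
  shows "\<forall>\<epsilon>>0. \<exists>\<delta>>0. \<forall>x\<in>X.
           V_s X f \<epsilon> x \<inter> V_u X g \<epsilon> x = {x} \<longrightarrow> dyn_ball X f g \<delta> x = {x}"
proof (intro allI impI)
  fix \<epsilon> :: real
  assume "\<epsilon> > 0"
  then obtain \<delta>f \<delta>b where "\<delta>f > 0" "L_shadowing_at X f g (\<epsilon> / 3) \<delta>f"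
    and "\<delta>b > 0" "L_shadowing_at X g f (\<epsilon> / 3) \<delta>b"
    using assms(3) L_shadowing_inverse [OF assms(2,1,3)] unfolding L_shadowing_iff
    by (meson divide_pos_pos zero_less_numeral)
  define \<delta> where "\<delta> = min (\<epsilon> / 3) (min \<delta>f \<delta>b)"
  have "\<delta> > 0" "\<delta> \<le> \<epsilon> / 3"
    using \<open>\<epsilon> > 0\<close> \<open>\<delta>f > 0\<close> \<open>\<delta>b > 0\<close> by (auto simp: \<delta>_def)
  have shadow: "L_shadowing_at X f g (\<epsilon> / 3) \<delta>" "L_shadowing_at X g f (\<epsilon> / 3) \<delta>"
    by (rule L_shadowing_at_mono, fact, simp add: \<delta>_def)+
  have "dyn_ball X f g \<delta> x = {x}" if "x \<in> X" "V_s X f \<epsilon> x \<inter> V_u X g \<epsilon> x = {x}" for x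
    using dyn_ball_subset_homoclinic [OF assms(2,1,3) \<open>\<epsilon> > 0\<close> shadow \<open>\<delta> \<le> \<epsilon> / 3\<close>] that \<open>\<delta> > 0\<close>
    by (auto simp: dyn_ball_def)
  with \<open>\<delta> > 0\<close> show "\<exists>\<delta>>0. \<forall>x\<in>X. V_s X f \<epsilon> x \<inter> V_u X g \<epsilon> x = {x} \<longrightarrow> dyn_ball X f g \<delta> x = {x}"
    by blast
qed

end
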